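(* For all positive integers $n,t$ and $q\ge2$, the Hamming graph $H(tn,q)$ covers the multigraph $tH(n,q)$.
   Context: The Hamming graph $H(n,q)$ has vertex set $\mathbb{Z}_q^n$, two vertices adjacent iff they differ in exactly one coordinate. For a multigraph $G$ and positive integer $t$, $tG$ denotes the multigraph in which every edge and loop of $G$ has multiplicity $t$ times its multiplicity in $G$. A multigraph $G=(V,E)$ covers a multigraph $H=(U,W)$ if there is a surjective map $\varphi:V\to U$ such that for every $v\in V$ the multiset $\{\varphi(u): (u,v)\in E\}$ equals the multiset of neighbours of $\varphi(v)$ in $H$ (with multiplicities). *)

theory Defs
  imports Main "HOL-Library.Multiset"
begin

text \<open>A (finite) multigraph on a vertex set V is given by a symmetric multiplicity
  function m :: 'a => 'a => nat; m u v is the number of edges between u and v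
  (m v v the number of loops at v).\<close>

definition nbr_mset :: "'a set \<Rightarrow> ('a \<Rightarrow> 'a \<Rightarrow> nat) \<Rightarrow> 'a \<Rightarrow> 'a multiset" where
  "nbr_mset V m v = (\<Sum>u\<in>V. replicate_mset (m u v) u)"

definition covers_via ::
  "'a set \<Rightarrow> ('a \<Rightarrow> 'a \<Rightarrow> nat) \<Rightarrow> 'b set \<Rightarrow> ('b \<Rightarrow> 'b \<Rightarrow> nat) \<Rightarrow> ('a \<Rightarrow> 'b) \<Rightarrow> bool" where
  "covers_via V mG U mH \<phi> \<longleftrightarrow>
     \<phi> ` V = U \<and> (\<forall>v\<in>V. image_mset \<phi> (nbr_mset V mG v) = nbr_mset U mH (\<phi> v))"

definition covers ::
  "'a set \<Rightarrow> ('a \<Rightarrow> 'a \<Rightarrow> nat) \<Rightarrow> 'b set \<Rightarrow> ('b \<Rightarrow> 'b \<Rightarrow> nat) \<Rightarrow> bool" where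
  "covers V mG U mH \<longleftrightarrow> (\<exists>\<phi>. covers_via V mG U mH \<phi>)"

text \<open>Hamming graph H(n,q): vertices Z_q^n, represented as functions nat => nat with
  values < q on {0..<n} and 0 elsewhere.\<close>
definition hamming_verts :: "nat \<Rightarrow> nat \<Rightarrow> (nat \<Rightarrow> nat) set" where
  "hamming_verts n q = {x. (\<forall>i<n. x i < q) \<and> (\<forall>i\<ge>n. x i = 0)}"

definition hamming_mult :: "nat \<Rightarrow> (nat \<Rightarrow> nat) \<Rightarrow> (nat \<Rightarrow> nat) \<Rightarrow> nat" where
  "hamming_mult n x y = (if card {i. i < n \<and> x i \<noteq> y i} = 1 then 1 else 0)"

definition scale_mult :: "nat \<Rightarrow> ('a \<Rightarrow> 'a \<Rightarrow> nat) \<Rightarrow> 'a \<Rightarrow> 'a \<Rightarrow> nat" where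
  "scale_mult t m x y = t * m x y"

end

theory Submission
  imports Defs "HOL-Number_Theory.Cong"
begin

text \<open>Fold H(tn,q) onto H(n,q) by summing, modulo q, the t coordinates of each residue
  class mod n: the i-th coordinate of the image of x is the sum of the x (i + j n) for j < t.
  Changing one coordinate k of x by a changes exactly the image coordinate k mod n by a
  (mod q), so neighbours go to neighbours. Conversely, a neighbour z of the image that differs
  from it in coordinate i is hit from exactly t neighbours of x: one for each k < tn with
  k mod n = i, the new value at k being forced by the congruence.\<close>

lemma count_image_nbr_mset:
  assumes "finite V"
  shows "count (image_mset f (nbr_mset V m v)) z = (\<Sum>u | u \<in> V \<and> f u = z. m u v)"
proof -
  have "count (image_mset f (nbr_mset V m v)) z = (\<Sum>u\<in>V. if f u = z then m u v else 0)"
    using assms unfolding nbr_mset_def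
    by (induction V rule: finite_induct) simp_all
  also have "\<dots> = (\<Sum>u | u \<in> V \<and> f u = z. m u v)"
    using assms by (simp add: sum.inter_filter)
  finally show ?thesis .
qed

lemma count_nbr_mset:
  assumes "finite U"
  shows "count (nbr_mset U m v) z = (if z \<in> U then m z v else 0)"
  using assms by (simp add: nbr_mset_def count_sum)

lemma covers_viaI:
  assumes "finite V" and "f ` V = U"
    and "\<And>v z. v \<in> V \<Longrightarrow> z \<in> U \<Longrightarrow> (\<Sum>u | u \<in> V \<and> f u = z. mG u v) = mH z (f v)"
  shows "covers_via V mG U mH f"
  unfolding covers_via_def
proof (intro conjI ballI multiset_eqI)
  fix v z assume "v \<in> V"
  have "finite U" using assms(1,2) by blast
  show "count (image_mset f (nbr_mset V mG v)) z = count (nbr_mset U mH (f v)) z"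
  proof (cases "z \<in> U")
    case True
    then show ?thesis
      using assms \<open>v \<in> V\<close> \<open>finite U\<close> by (simp add: count_image_nbr_mset count_nbr_mset)
  next
    case False
    then have "{u. u \<in> V \<and> f u = z} = {}" using assms(2) by blast
    then show ?thesis
      using False assms(1) \<open>finite U\<close> by (simp only: count_image_nbr_mset count_nbr_mset) simp
  qed
qed (use assms(2) in simp)

lemma sum_fun_upd_reindex:
  fixes x :: "'a \<Rightarrow> 'b::comm_monoid_add"
  assumes "finite A" "j \<in> A" "inj_on g A"
  shows "(\<Sum>i\<in>A. (x(g j := a)) (g i)) + x (g j) = (\<Sum>i\<in>A. x (g i)) + a"
proof -
  have "(\<Sum>i\<in>A - {j}. (x(g j := a)) (g i)) = (\<Sum>i\<in>A - {j}. x (g i))"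
    using assms(2,3) by (intro sum.cong) (auto dest: inj_onD)
  then show ?thesis
    using assms by (simp add: sum.remove ac_simps)
qed

lemma card_residue_class_less_mult:
  assumes "i < n"
  shows "card {k. k < t * n \<and> k mod n = i} = t"
proof -
  have "bij_betw (\<lambda>j. i + j * n) {..<t} {k. k < t * n \<and> k mod n = i}"
  proof (rule bij_betw_imageI)
    show "inj_on (\<lambda>j. i + j * n) {..<t}"
      using assms by (auto simp: inj_on_def)
    show "(\<lambda>j. i + j * n) ` {..<t} = {k. k < t * n \<and> k mod n = i}"
    proof (intro equalityI subsetI)
      fix k assume "k \<in> (\<lambda>j. i + j * n) ` {..<t}"
      then obtain j where "j < t" and k: "k = i + j * n" by blast
      have "i + j * n < Suc j * n" using assms by simp
      also have "\<dots> \<le> t * n" using \<open>j < t\<close> by (intro mult_le_mono1) simp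
      finally show "k \<in> {k. k < t * n \<and> k mod n = i}"
        using assms k by simp
    next
      fix k assume k: "k \<in> {k. k < t * n \<and> k mod n = i}"
      then have "k = i + k div n * n" "k div n < t"
        by (auto simp: less_mult_imp_div_less)
      then show "k \<in> (\<lambda>j. i + j * n) ` {..<t}" by blast
    qed
  qed
  then show ?thesis by (metis bij_betw_same_card card_lessThan)
qed

lemma cong_add_unique_solution_nat:
  fixes b c q y :: nat
  assumes "b < q"
  shows "a < q \<and> [c + y = b + a] (mod q) \<longleftrightarrow> a = (c + y + (q - b)) mod q"
proof -
  let ?a = "(c + y + (q - b)) mod q"
  have sol: "[c + y = b + ?a] (mod q)"
    using assms unfolding cong_def by (simp add: mod_add_right_eq)
  have "a = ?a" if "a < q" "[c + y = b + a] (mod q)"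
  proof -
    have "[b + a = b + ?a] (mod q)"
      using that(2) sol by (metis cong_sym cong_trans)
    then have "[a = ?a] (mod q)"
      by (simp add: cong_add_lcancel_nat)
    then show ?thesis
      by (rule cong_less_modulus_unique_nat[OF _ that(1)]) (use assms in simp)
  qed
  moreover have "?a < q" using assms by simp
  ultimately show ?thesis using sol by blast
qed

lemma cong_add_solution_ne_nat:
  fixes b c q y :: nat
  assumes "b < q" "c < q" "y < q" "c \<noteq> b"
  shows "(c + y + (q - b)) mod q \<noteq> y"
proof
  assume "(c + y + (q - b)) mod q = y"
  then have "[c + y = b + y] (mod q)"
    using cong_add_unique_solution_nat[OF assms(1), of y c y] assms(3) by simp
  then show False
    using assms by (metis cong_add_rcancel_nat cong_less_modulus_unique_nat)
qed

lemma finite_hamming_verts: "finite (hamming_verts n q)"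
proof -
  have "hamming_verts n q = {x. \<forall>i. (i \<in> {..<n} \<longrightarrow> x i \<in> {..<q}) \<and> (i \<notin> {..<n} \<longrightarrow> x i = 0)}"
    unfolding hamming_verts_def by (simp add: not_less) blast
  also have "finite \<dots>"
    by (rule finite_set_of_finite_funs) simp_all
  finally show ?thesis .
qed

lemma fun_upd_in_hamming_verts:
  "x \<in> hamming_verts N q \<Longrightarrow> k < N \<Longrightarrow> a < q \<Longrightarrow> x(k := a) \<in> hamming_verts N q"
  by (simp add: hamming_verts_def)

lemma hamming_mult_eq_1_iff:
  assumes "x \<in> hamming_verts N q" "u \<in> hamming_verts N q"
  shows "hamming_mult N u x = 1 \<longleftrightarrow> (\<exists>k<N. u k \<noteq> x k \<and> u = x(k := u k))"
proof -
  have "card {i. i < N \<and> u i \<noteq> x i} = 1 \<longleftrightarrow> (\<exists>k<N. u k \<noteq> x k \<and> u = x(k := u k))"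
  proof
    assume "card {i. i < N \<and> u i \<noteq> x i} = 1"
    then obtain k where k: "{i. i < N \<and> u i \<noteq> x i} = {k}"
      by (auto simp: card_1_singleton_iff)
    have off_k: "u i = x i" if "i \<noteq> k" for i
    proof (cases "i < N")
      case True
      then show ?thesis using k that by blast
    next
      case False
      then show ?thesis using assms by (simp add: hamming_verts_def)
    qed
    have "u = x(k := u k)"
    proof
      fix i show "u i = (x(k := u k)) i" using off_k by (cases "i = k") simp_all
    qed
    then show "\<exists>k<N. u k \<noteq> x k \<and> u = x(k := u k)"
      using k by blast
  next
    assume "\<exists>k<N. u k \<noteq> x k \<and> u = x(k := u k)"
    then obtain k where k: "k < N" "u k \<noteq> x k" and u: "u = x(k := u k)" by blast
    have "u i = x i" if "i \<noteq> k" for i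
      using that by (subst u) simp
    then have "{i. i < N \<and> u i \<noteq> x i} = {k}"
      using k by blast
    then show "card {i. i < N \<and> u i \<noteq> x i} = 1" by simp
  qed
  then show ?thesis by (simp add: hamming_mult_def)
qed

lemma hamming_neighbours:
  assumes "x \<in> hamming_verts N q"
  shows "{u \<in> hamming_verts N q. hamming_mult N u x = 1 \<and> P u} =
         {x(k := a) | k a. k < N \<and> a < q \<and> a \<noteq> x k \<and> P (x(k := a))}"
proof (intro equalityI subsetI)
  fix u assume "u \<in> {u \<in> hamming_verts N q. hamming_mult N u x = 1 \<and> P u}"
  then have u: "u \<in> hamming_verts N q" "hamming_mult N u x = 1" "P u" by auto
  then obtain k where "k < N" "u k \<noteq> x k" "u = x(k := u k)"
    using hamming_mult_eq_1_iff[OF assms] by blast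
  moreover have "u k < q" using u \<open>k < N\<close> by (simp add: hamming_verts_def)
  moreover have "P (x(k := u k))"
    using \<open>P u\<close> \<open>u = x(k := u k)\<close> by simp
  ultimately show "u \<in> {x(k := a) | k a. k < N \<and> a < q \<and> a \<noteq> x k \<and> P (x(k := a))}"
    by blast
next
  fix u assume "u \<in> {x(k := a) | k a. k < N \<and> a < q \<and> a \<noteq> x k \<and> P (x(k := a))}"
  then obtain k a where "k < N" "a < q" "a \<noteq> x k" "P u" and u: "u = x(k := a)" by blast
  then have "u \<in> hamming_verts N q"
    using assms by (simp add: fun_upd_in_hamming_verts)
  moreover have "\<exists>k<N. u k \<noteq> x k \<and> u = x(k := u k)"
    using \<open>k < N\<close> \<open>a \<noteq> x k\<close> u by (intro exI[of _ k]) simp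
  then have "hamming_mult N u x = 1"
    using hamming_mult_eq_1_iff[OF assms \<open>u \<in> hamming_verts N q\<close>] by blast
  ultimately show "u \<in> {u \<in> hamming_verts N q. hamming_mult N u x = 1 \<and> P u}"
    using \<open>P u\<close> by blast
qed

lemma hamming_verts_mono:
  "n \<le> N \<Longrightarrow> 0 < q \<Longrightarrow> hamming_verts n q \<subseteq> hamming_verts N q"
  by (auto simp: hamming_verts_def) (metis leI)

definition block_sum :: "nat \<Rightarrow> nat \<Rightarrow> nat \<Rightarrow> (nat \<Rightarrow> nat) \<Rightarrow> nat \<Rightarrow> nat" where
  "block_sum n t q x i = (if i < n then (\<Sum>j<t. x (i + j * n)) mod q else 0)"

lemma block_sum_in_hamming_verts: "0 < q \<Longrightarrow> block_sum n t q x \<in> hamming_verts n q"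
  by (simp add: block_sum_def hamming_verts_def)

lemma block_sum_of_hamming_verts:
  assumes "y \<in> hamming_verts n q" "0 < t"
  shows "block_sum n t q y = y"
proof
  fix i
  show "block_sum n t q y i = y i"
  proof (cases "i < n")
    case True
    have "n \<le> i + j * n" if "0 < j" for j
      using that by (cases j) auto
    then have "(\<Sum>j<t. y (i + j * n)) = (\<Sum>j<t. if j = 0 then y i else 0)"
      using assms(1) by (intro sum.cong) (auto simp: hamming_verts_def)
    then show ?thesis
      using True assms by (simp add: block_sum_def hamming_verts_def)
  next
    case False
    then show ?thesis
      using assms(1) by (simp add: block_sum_def hamming_verts_def)
  qed
qed

lemma block_sum_image:
  assumes "0 < t" "0 < q"
  shows "block_sum n t q ` hamming_verts (t * n) q = hamming_verts n q"
proof (intro equalityI subsetI)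
  fix y assume y: "y \<in> hamming_verts n q"
  then have "y \<in> hamming_verts (t * n) q"
    using hamming_verts_mono[of n "t * n" q] assms by auto
  then show "y \<in> block_sum n t q ` hamming_verts (t * n) q"
    using block_sum_of_hamming_verts[OF y assms(1)] by (metis image_eqI)
qed (use block_sum_in_hamming_verts assms in blast)

lemma block_sum_fun_upd_other:
  assumes "k < t * n" "i \<noteq> k mod n"
  shows "block_sum n t q (x(k := a)) i = block_sum n t q x i"
proof -
  have "i + j * n \<noteq> k" if "i < n" for j
    using assms(2) that by auto
  then show ?thesis by (simp add: block_sum_def)
qed

lemma block_sum_fun_upd_cong:
  assumes "k < t * n"
  shows "[block_sum n t q (x(k := a)) (k mod n) + x k = block_sum n t q x (k mod n) + a] (mod q)"
proof -
  have "0 < n" using assms by (cases n) simp_all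
  let ?g = "\<lambda>j. k mod n + j * n"
  have "k = ?g (k div n)" by simp
  moreover have "k div n < t" using assms by (simp add: less_mult_imp_div_less)
  moreover have "inj_on ?g {..<t}" using \<open>0 < n\<close> by (auto simp: inj_on_def)
  ultimately have "(\<Sum>j<t. (x(k := a)) (?g j)) + x k = (\<Sum>j<t. x (?g j)) + a"
    using sum_fun_upd_reindex[of "{..<t}" "k div n" ?g x a] by simp
  then show ?thesis
    using \<open>0 < n\<close> unfolding block_sum_def cong_def by (simp add: mod_add_left_eq)
qed

lemma block_sum_fun_upd:
  assumes "k < t * n"
  shows "block_sum n t q (x(k := a)) =
         (block_sum n t q x)(k mod n := block_sum n t q (x(k := a)) (k mod n))"
  using block_sum_fun_upd_other[OF assms] by (auto simp: fun_eq_iff)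

lemma block_sum_fun_upd_eq_iff:
  assumes "k < t * n" "x k < q" "a < q"
  shows "block_sum n t q (x(k := a)) (k mod n) = block_sum n t q x (k mod n) \<longleftrightarrow> a = x k"
proof
  assume "block_sum n t q (x(k := a)) (k mod n) = block_sum n t q x (k mod n)"
  then have "[x k = a] (mod q)"
    using block_sum_fun_upd_cong[OF assms(1), of q x a] by (simp add: cong_add_lcancel_nat)
  then show "a = x k"
    using assms(2,3) by (metis cong_less_modulus_unique_nat)
qed simp

lemma block_sum_fun_upd_eq_fun_upd_iff:
  assumes "k < t * n" "a < q" "i < n" "c < q" "c \<noteq> block_sum n t q x i"
  shows "block_sum n t q (x(k := a)) = (block_sum n t q x)(i := c) \<longleftrightarrow>
         k mod n = i \<and> [c + x k = block_sum n t q x i + a] (mod q)"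
proof
  assume eq: "block_sum n t q (x(k := a)) = (block_sum n t q x)(i := c)"
  have "k mod n = i"
  proof (rule ccontr)
    assume "k mod n \<noteq> i"
    then have "block_sum n t q (x(k := a)) i = block_sum n t q x i"
      using block_sum_fun_upd_other[OF assms(1)] by metis
    then show False using eq assms(5) by (metis fun_upd_same)
  qed
  moreover have "block_sum n t q (x(k := a)) i = c"
    using eq by (metis fun_upd_same)
  ultimately show "k mod n = i \<and> [c + x k = block_sum n t q x i + a] (mod q)"
    using block_sum_fun_upd_cong[OF assms(1), of q x a] by simp
next
  assume "k mod n = i \<and> [c + x k = block_sum n t q x i + a] (mod q)"
  then have i: "i = k mod n" and "[c + x k = block_sum n t q x i + a] (mod q)" by auto
  with block_sum_fun_upd_cong[OF assms(1), of q x a]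
  have "[block_sum n t q (x(k := a)) i = c] (mod q)"
    by (metis cong_add_rcancel_nat cong_sym cong_trans)
  moreover have "block_sum n t q (x(k := a)) i < q"
    using assms(2) by (simp add: block_sum_def)
  ultimately have "block_sum n t q (x(k := a)) i = c"
    using assms(4) by (metis cong_less_modulus_unique_nat)
  then show "block_sum n t q (x(k := a)) = (block_sum n t q x)(i := c)"
    using block_sum_fun_upd[OF assms(1), of q x a] i by simp
qed

lemma hamming_mult_block_sum_fun_upd:
  assumes "0 < q" "x \<in> hamming_verts (t * n) q" "k < t * n" "a < q" "a \<noteq> x k"
  shows "hamming_mult n (block_sum n t q (x(k := a))) (block_sum n t q x) = 1"
proof -
  have "k mod n < n" using assms(3) by (cases n) simp_all
  moreover have "x k < q" using assms(2,3) by (simp add: hamming_verts_def)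
  then have "block_sum n t q (x(k := a)) (k mod n) \<noteq> block_sum n t q x (k mod n)"
    using block_sum_fun_upd_eq_iff[OF assms(3)] assms(4,5) by blast
  ultimately show ?thesis
    using hamming_mult_eq_1_iff[OF block_sum_in_hamming_verts block_sum_in_hamming_verts, OF assms(1,1)]
      block_sum_fun_upd[OF assms(3)] by blast
qed

lemma block_sum_fibre_neighbours_fun_upd:
  assumes "0 < q" "x \<in> hamming_verts (t * n) q" "i < n" "c < q" "c \<noteq> block_sum n t q x i"
  shows "{u \<in> hamming_verts (t * n) q. hamming_mult (t * n) u x = 1 \<and>
           block_sum n t q u = (block_sum n t q x)(i := c)} =
         (\<lambda>k. x(k := (c + x k + (q - block_sum n t q x i)) mod q)) ` {k. k < t * n \<and> k mod n = i}"
    (is "_ = (\<lambda>k. x(k := ?\<beta> k)) ` ?K")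
proof -
  let ?w = "block_sum n t q x"
  have "?w i < q" using assms(1) by (simp add: block_sum_def)
  have xq: "x k < q" if "k < t * n" for k
    using assms(2) that by (simp add: hamming_verts_def)
  have "{u \<in> hamming_verts (t * n) q. hamming_mult (t * n) u x = 1 \<and> block_sum n t q u = ?w(i := c)}
      = {x(k := a) | k a. k < t * n \<and> a < q \<and> a \<noteq> x k \<and> block_sum n t q (x(k := a)) = ?w(i := c)}"
    by (rule hamming_neighbours[OF assms(2), where P = "\<lambda>u. block_sum n t q u = ?w(i := c)"])
  also have "\<dots> = (\<lambda>k. x(k := ?\<beta> k)) ` ?K"
  proof (intro equalityI subsetI)
    fix u
    assume "u \<in> {x(k := a) | k a. k < t * n \<and> a < q \<and> a \<noteq> x k \<and>
                    block_sum n t q (x(k := a)) = ?w(i := c)}"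
    then obtain k a where k: "k < t * n" "a < q" "block_sum n t q (x(k := a)) = ?w(i := c)"
      and u: "u = x(k := a)" by blast
    have "k mod n = i \<and> [c + x k = ?w i + a] (mod q)"
      using block_sum_fun_upd_eq_fun_upd_iff[OF k(1,2) assms(3-5)] k(3) by (rule iffD1)
    then have "k \<in> ?K" "a = ?\<beta> k"
      using cong_add_unique_solution_nat[OF \<open>?w i < q\<close>, of a c "x k"] k(1,2) by blast+
    then show "u \<in> (\<lambda>k. x(k := ?\<beta> k)) ` ?K"
      using u by (intro image_eqI[of _ _ k]) simp_all
  next
    fix u assume "u \<in> (\<lambda>k. x(k := ?\<beta> k)) ` ?K"
    then obtain k where k: "k < t * n" "k mod n = i" and u: "u = x(k := ?\<beta> k)" by blast
    have "?\<beta> k < q" "[c + x k = ?w i + ?\<beta> k] (mod q)"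
      using cong_add_unique_solution_nat[OF \<open>?w i < q\<close>, of "?\<beta> k" c "x k"] by blast+
    then have "block_sum n t q (x(k := ?\<beta> k)) = ?w(i := c)"
      using block_sum_fun_upd_eq_fun_upd_iff[OF k(1) \<open>?\<beta> k < q\<close> assms(3-5)] k(2) by (simp only:)
    moreover have "?\<beta> k \<noteq> x k"
      using cong_add_solution_ne_nat[OF \<open>?w i < q\<close> assms(4) xq[OF k(1)] assms(5)] .
    ultimately show "u \<in> {x(k := a) | k a. k < t * n \<and> a < q \<and> a \<noteq> x k \<and>
                    block_sum n t q (x(k := a)) = ?w(i := c)}"
      using u k(1) \<open>?\<beta> k < q\<close> by blast
  qed
  finally show ?thesis .
qed

lemma card_block_sum_fibre_neighbours_fun_upd:
  assumes "0 < q" "x \<in> hamming_verts (t * n) q" "i < n" "c < q" "c \<noteq> block_sum n t q x i"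
  shows "card {u \<in> hamming_verts (t * n) q. hamming_mult (t * n) u x = 1 \<and>
                block_sum n t q u = (block_sum n t q x)(i := c)} = t"
proof -
  let ?\<beta> = "\<lambda>k. (c + x k + (q - block_sum n t q x i)) mod q"
  let ?K = "{k. k < t * n \<and> k mod n = i}"
  have "block_sum n t q x i < q" using assms(1) by (simp add: block_sum_def)
  have inj: "inj_on (\<lambda>k. x(k := ?\<beta> k)) ?K"
  proof (rule inj_onI, rule ccontr)
    fix k l assume "k \<in> ?K" and eq: "x(k := ?\<beta> k) = x(l := ?\<beta> l)" and "k \<noteq> l"
    have "x k < q" using assms(2) \<open>k \<in> ?K\<close> by (simp add: hamming_verts_def)
    have "?\<beta> k = x k"
      using fun_cong[OF eq, of k] \<open>k \<noteq> l\<close> by simp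
    then show False
      using cong_add_solution_ne_nat[OF \<open>block_sum n t q x i < q\<close> assms(4) \<open>x k < q\<close> assms(5)] by blast
  qed
  show ?thesis
    unfolding block_sum_fibre_neighbours_fun_upd[OF assms]
    by (simp only: card_image[OF inj] card_residue_class_less_mult[OF assms(3)])
qed

lemma card_block_sum_fibre_neighbours:
  assumes "0 < q" "x \<in> hamming_verts (t * n) q" "z \<in> hamming_verts n q"
  shows "card {u \<in> hamming_verts (t * n) q. hamming_mult (t * n) u x = 1 \<and> block_sum n t q u = z}
         = t * hamming_mult n z (block_sum n t q x)"
proof (cases "hamming_mult n z (block_sum n t q x) = 1")
  case True
  then obtain i where i: "i < n" "z i \<noteq> block_sum n t q x i" and z: "z = (block_sum n t q x)(i := z i)"
    using hamming_mult_eq_1_iff[OF block_sum_in_hamming_verts[OF assms(1)] assms(3)] by blast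
  have "z i < q" using assms(3) i(1) by (simp add: hamming_verts_def)
  then show ?thesis
    using card_block_sum_fibre_neighbours_fun_upd[OF assms(1,2) i(1) _ i(2)] True z by simp
next
  case False
  then have "hamming_mult n z (block_sum n t q x) = 0"
    by (auto simp: hamming_mult_def)
  moreover have "{u \<in> hamming_verts (t * n) q. hamming_mult (t * n) u x = 1 \<and> block_sum n t q u = z} = {}"
    unfolding hamming_neighbours[OF assms(2), where P = "\<lambda>u. block_sum n t q u = z"]
    using hamming_mult_block_sum_fun_upd[OF assms(1,2)] False by blast
  ultimately show ?thesis by (metis card.empty mult_0_right)
qed

lemma sum_hamming_mult:
  assumes "finite A"
  shows "(\<Sum>u\<in>A. hamming_mult N u x) = card {u \<in> A. hamming_mult N u x = 1}"
proof -
  have "(\<Sum>u\<in>A. hamming_mult N u x) = (\<Sum>u\<in>A. if hamming_mult N u x = 1 then 1 else 0)"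
    by (intro sum.cong) (simp_all add: hamming_mult_def)
  also have "\<dots> = (\<Sum>u\<in>{u \<in> A. hamming_mult N u x = 1}. 1)"
    by (rule sum.inter_filter[OF assms, symmetric])
  also have "\<dots> = card {u \<in> A. hamming_mult N u x = 1}"
    by (rule card_eq_sum[symmetric])
  finally show ?thesis .
qed

theorem proposition6:
  fixes n t q :: nat
  assumes "n > 0" and "t > 0" and "q \<ge> 2"
  shows "covers (hamming_verts (t * n) q) (hamming_mult (t * n))
                (hamming_verts n q) (scale_mult t (hamming_mult n))"
  unfolding covers_def
proof
  have "0 < q" using assms(3) by simp
  show "covers_via (hamming_verts (t * n) q) (hamming_mult (t * n))
          (hamming_verts n q) (scale_mult t (hamming_mult n)) (block_sum n t q)"
  proof (rule covers_viaI[OF finite_hamming_verts block_sum_image[OF assms(2) \<open>0 < q\<close>]])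
    fix x z assume x: "x \<in> hamming_verts (t * n) q" and z: "z \<in> hamming_verts n q"
    have "(\<Sum>u | u \<in> hamming_verts (t * n) q \<and> block_sum n t q u = z. hamming_mult (t * n) u x)
        = card {u \<in> {u. u \<in> hamming_verts (t * n) q \<and> block_sum n t q u = z}. hamming_mult (t * n) u x = 1}"
      by (rule sum_hamming_mult) (simp add: finite_hamming_verts)
    also have "{u \<in> {u. u \<in> hamming_verts (t * n) q \<and> block_sum n t q u = z}. hamming_mult (t * n) u x = 1}
        = {u \<in> hamming_verts (t * n) q. hamming_mult (t * n) u x = 1 \<and> block_sum n t q u = z}"
      by blast
    finally show "(\<Sum>u | u \<in> hamming_verts (t * n) q \<and> block_sum n t q u = z. hamming_mult (t * n) u x)
               = scale_mult t (hamming_mult n) z (block_sum n t q x)"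
      using card_block_sum_fibre_neighbours[OF \<open>0 < q\<close> x z] by (simp add: scale_mult_def)
  qed
qed

end
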